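(* Fix $\nu>1$ and $F>2$. Let $\gamma_{1,+}(\lambda,\eta)$ denote an eigenvalue of smallest real part of the matrix $G(+\infty;\lambda,\eta)$. Then $\Re\gamma_{1,+}(\lambda,\eta)$ is bounded from below on $\{(\lambda,\eta):\Re\lambda\ge0,\ \eta\in\mathbb{R}\}$.
   Context: Set $H=\nu^{-2}$, $Q=\nu^{-3}$, $s=\frac{\nu^2+\nu+1}{\nu(\nu+1)}$, and $A_1=\begin{pmatrix}-s&1&0\\ H/F^2-Q^2/H^2&2Q/H-s&0\\0&0&Q/H-s\end{pmatrix}$, $A_2=\begin{pmatrix}0&0&1\\0&0&Q/H\\ H/F^2&0&0\end{pmatrix}$, $E=\begin{pmatrix}0&0&0\\ 2Q^2/H^3+1&-2Q/H^2&0\\0&0&-Q/H^2\end{pmatrix}$ (here $A_1$ is invertible since $F\ne(\nu+1)/\nu^2$), and $G(+\infty;\lambda,\eta)=(E-\lambda I-i\eta A_2)A_1^{-1}$. This is the limiting matrix at the downstream endstate of a hydraulic shock of the inviscid Saint-Venant equations with Froude number $F$ and endstates $(1,1,0)$, $(\nu^{-2},\nu^{-3},0)$. *)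

theory Defs
  imports "HOL-Analysis.Analysis"
begin

text \<open>Endstate quantities of the hydraulic shock (downstream endstate).\<close>

definition HH :: "real \<Rightarrow> real" where "HH \<nu> = \<nu> powi (-2)"
definition QQ :: "real \<Rightarrow> real" where "QQ \<nu> = \<nu> powi (-3)"
definition ss :: "real \<Rightarrow> real" where "ss \<nu> = (\<nu>^2 + \<nu> + 1) / (\<nu> * (\<nu> + 1))"

definition A1 :: "real \<Rightarrow> real \<Rightarrow> complex^3^3" where
  "A1 \<nu> F = (let H = HH \<nu>; Q = QQ \<nu>; s = ss \<nu> in
     vector [vector [complex_of_real (-s), 1, 0],
             vector [complex_of_real (H / F^2 - Q^2 / H^2), complex_of_real (2*Q/H - s), 0],
             vector [0, 0, complex_of_real (Q/H - s)]])"

definition A2 :: "real \<Rightarrow> real \<Rightarrow> complex^3^3" where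
  "A2 \<nu> F = (let H = HH \<nu>; Q = QQ \<nu> in
     vector [vector [0, 0, 1],
             vector [0, 0, complex_of_real (Q/H)],
             vector [complex_of_real (H / F^2), 0, 0]])"

definition EE :: "real \<Rightarrow> complex^3^3" where
  "EE \<nu> = (let H = HH \<nu>; Q = QQ \<nu> in
     vector [vector [0, 0, 0],
             vector [complex_of_real (2*Q^2/H^3 + 1), complex_of_real (-2*Q/H^2), 0],
             vector [0, 0, complex_of_real (-Q/H^2)]])"

definition Gplus :: "real \<Rightarrow> real \<Rightarrow> complex \<Rightarrow> real \<Rightarrow> complex^3^3" where
  "Gplus \<nu> F lam \<eta> =
     (EE \<nu> - mat lam - mat (\<i> * complex_of_real \<eta>) ** A2 \<nu> F) ** matrix_inv (A1 \<nu> F)"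

definition is_eigenvalue :: "complex^'n^'n \<Rightarrow> complex \<Rightarrow> bool" where
  "is_eigenvalue M \<gamma> \<longleftrightarrow> (\<exists>v. v \<noteq> 0 \<and> M *v v = \<gamma> *s v)"

end

(*
  An eigenvalue gamma of G = N A1^-1, with N = E - lambda I - i eta A2, is a
  generalized eigenvalue: N w = gamma A1 w for some w ~= 0. The Saint-Venant symmetrizer S
  makes S A1 and S A2 real symmetric, and for nu > 1, F > 2 the form w* S A1 w is negative
  definite. Pairing N w = gamma A1 w with S w and taking real parts removes the term in eta:
      Re (w* S E w) - Re lambda (w* S w) = Re gamma (w* S A1 w).
  Since S is positive semidefinite and Re lambda >= 0, the left side is at most Re (w* S E w),
  and a negative definite form dominates every quadratic form: Re (w* S E w) <= -L (w* S A1 w)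
  for a constant L. Dividing by the negative number w* S A1 w gives Re gamma >= -L.
*)

theory Submission
  imports Defs
begin

section \<open>Hermitian forms and a bound for generalized eigenvalues\<close>

definition cinner :: "complex^'n \<Rightarrow> complex^'n \<Rightarrow> complex" where
  "cinner u v = (\<Sum>i\<in>UNIV. cnj (u$i) * v$i)"

definition quad_form :: "complex^'n^'n \<Rightarrow> complex^'n \<Rightarrow> complex" where
  "quad_form M w = cinner w (M *v w)"

definition hermitian :: "complex^'n^'n \<Rightarrow> bool" where
  "hermitian M \<longleftrightarrow> (\<forall>i j. cnj (M$i$j) = M$j$i)"

definition real_quad_form :: "complex^'n^'n \<Rightarrow> real^'n \<Rightarrow> real" where
  "real_quad_form M x = (\<Sum>i\<in>UNIV. \<Sum>j\<in>UNIV. Re (M$i$j) * x$i * x$j)"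

lemma cinner_diff_right: "cinner u (v - v') = cinner u v - cinner u v'"
  by (simp add: cinner_def algebra_simps sum_subtractf)

lemma cinner_scalar_right: "cinner u (c *s v) = c * cinner u v"
  by (simp add: cinner_def sum_distrib_left mult_ac)

lemma quad_form_expand: "quad_form M w = (\<Sum>i\<in>UNIV. \<Sum>j\<in>UNIV. cnj (w$i) * M$i$j * w$j)"
  by (simp add: quad_form_def cinner_def matrix_vector_mult_def sum_distrib_left mult.assoc)

lemma Im_quad_form_hermitian:
  assumes "hermitian M"
  shows "Im (quad_form M w) = 0"
proof -
  have "cnj (quad_form M w) = (\<Sum>i\<in>UNIV. \<Sum>j\<in>UNIV. w$i * cnj (M$i$j) * cnj (w$j))"
    by (simp add: quad_form_expand)
  also have "\<dots> = (\<Sum>i\<in>UNIV. \<Sum>j\<in>UNIV. cnj (w$j) * M$j$i * w$i)"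
    using assms by (simp add: hermitian_def mult_ac)
  also have "\<dots> = quad_form M w"
    unfolding quad_form_expand by (rule sum.swap)
  finally have "cnj (quad_form M w) = quad_form M w" .
  from arg_cong[OF this, of Im] show ?thesis
    by simp
qed

lemma Re_quad_form_real_matrix:
  assumes "\<And>i j. Im (M$i$j) = 0"
  shows "Re (quad_form M w) = real_quad_form M (\<chi> i. Re (w$i)) + real_quad_form M (\<chi> i. Im (w$i))"
  using assms by (simp add: quad_form_expand real_quad_form_def sum.distrib[symmetric] algebra_simps)

lemma Re_quad_form_nonneg:
  assumes "\<And>i j. Im (M$i$j) = 0" and "\<And>x. 0 \<le> real_quad_form M x"
  shows "0 \<le> Re (quad_form M w)"
  using assms by (simp add: Re_quad_form_real_matrix)

lemma Re_quad_form_absorb: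
  assumes "\<And>i j. Im (M$i$j) = 0" and "\<And>i j. Im (K$i$j) = 0"
    and "\<And>x. real_quad_form M x + L * real_quad_form K x \<le> 0"
  shows "Re (quad_form M w) + L * Re (quad_form K w) \<le> 0"
  using assms(3)[of "\<chi> i. Re (w$i)"] assms(3)[of "\<chi> i. Im (w$i)"]
  by (simp add: Re_quad_form_real_matrix[OF assms(1)] Re_quad_form_real_matrix[OF assms(2)]
      distrib_left)

lemma Re_quad_form_neg:
  assumes real: "\<And>i j. Im (M$i$j) = 0"
    and neg: "\<And>x. x \<noteq> 0 \<Longrightarrow> real_quad_form M x < 0" and "w \<noteq> 0"
  shows "Re (quad_form M w) < 0"
proof -
  have nonpos: "real_quad_form M x \<le> 0" for x
    by (cases "x = 0") (auto simp: real_quad_form_def dest: neg)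
  have "(\<chi> i. Re (w$i)) \<noteq> 0 \<or> (\<chi> i. Im (w$i)) \<noteq> 0"
    using \<open>w \<noteq> 0\<close> by (auto simp: vec_eq_iff complex_eq_iff)
  then show ?thesis
    using neg nonpos by (auto simp: Re_quad_form_real_matrix[OF real] add_neg_nonpos add_nonpos_neg)
qed

lemma mat_matrix_vector_mult: "mat c *v x = c *s (x :: 'a::semiring_1^'n)"
  by (simp add: vec_eq_iff matrix_vector_mult_def mat_def if_distrib if_distribR sum.delta
      cong: if_cong)

lemma matrix_inv_right:
  assumes "invertible A"
  shows "A ** matrix_inv A = mat 1"
  using assms unfolding invertible_def matrix_inv_def by (rule someI_ex[THEN conjunct1])

lemma eigenvalue_mult_matrix_inv:
  fixes N A :: "complex^'n^'n"
  assumes "invertible A" and "is_eigenvalue (N ** matrix_inv A) \<gamma>"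
  obtains w where "w \<noteq> 0" and "N *v w = \<gamma> *s (A *v w)"
proof -
  obtain v where "v \<noteq> 0" and v: "(N ** matrix_inv A) *v v = \<gamma> *s v"
    using assms(2) unfolding is_eigenvalue_def by blast
  define w where "w = matrix_inv A *v v"
  have "A *v w = v"
    by (simp add: w_def matrix_vector_mul_assoc matrix_inv_right[OF assms(1)])
  then have "w \<noteq> 0"
    using \<open>v \<noteq> 0\<close> by auto
  moreover have "N *v w = \<gamma> *s (A *v w)"
    using v \<open>A *v w = v\<close> by (simp add: w_def matrix_vector_mul_assoc)
  ultimately show ?thesis
    using that by blast
qed

lemma Re_generalized_eigenvalue_lower_bound:
  fixes S E A B :: "complex^'n^'n"
  assumes herm: "hermitian S" "hermitian (S ** A)" "hermitian (S ** B)"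
    and S_nonneg: "\<And>w. 0 \<le> Re (quad_form S w)"
    and B_neg: "\<And>w. w \<noteq> 0 \<Longrightarrow> Re (quad_form (S ** B) w) < 0"
    and absorb: "\<And>w. Re (quad_form (S ** E) w) + L * Re (quad_form (S ** B) w) \<le> 0"
    and "0 \<le> Re lam" and "w \<noteq> 0"
    and eig: "(E - mat lam - mat (\<i> * complex_of_real \<eta>) ** A) *v w = \<gamma> *s (B *v w)"
  shows "-L \<le> Re \<gamma>"
proof -
  have "E *v w - lam *s w - (\<i> * \<eta>) *s (A *v w) = \<gamma> *s (B *v w)"
    using eig by (simp add: matrix_vector_mult_diff_rdistrib mat_matrix_vector_mult
        flip: matrix_vector_mul_assoc)
  from arg_cong[OF this, of "(*v) S"]
  have "(S ** E) *v w - lam *s (S *v w) - (\<i> * \<eta>) *s ((S ** A) *v w) = \<gamma> *s ((S ** B) *v w)"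
    by (simp add: matrix_vector_mult_diff_distrib vector_scalar_commute matrix_vector_mul_assoc)
  from arg_cong[OF this, of "cinner w"]
  have "quad_form (S ** E) w - lam * quad_form S w - (\<i> * \<eta>) * quad_form (S ** A) w
      = \<gamma> * quad_form (S ** B) w"
    by (simp add: quad_form_def cinner_diff_right cinner_scalar_right)
  from arg_cong[OF this, of Re] have energy: "Re (quad_form (S ** E) w) - Re lam * Re (quad_form S w)
      = Re \<gamma> * Re (quad_form (S ** B) w)"
    by (simp add: Im_quad_form_hermitian[OF herm(1)] Im_quad_form_hermitian[OF herm(2)]
        Im_quad_form_hermitian[OF herm(3)])
  have "0 \<le> Re lam * Re (quad_form S w)"
    using \<open>0 \<le> Re lam\<close> S_nonneg by simp
  then have "Re \<gamma> * Re (quad_form (S ** B) w) \<le> (- L) * Re (quad_form (S ** B) w)"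
    using energy absorb[of w] by linarith
  then show ?thesis
    by (simp only: mult_le_cancel_right_neg[OF B_neg[OF \<open>w \<noteq> 0\<close>]])
qed

section \<open>Real quadratic forms in two and three variables\<close>

lemma binary_form_nonpos:
  fixes p m r x y :: real
  assumes "r < 0" and "m^2 \<le> p * r"
  shows "p * x^2 + 2 * m * x * y + r * y^2 \<le> 0"
proof -
  have "r * (p * x^2 + 2 * m * x * y + r * y^2) = (r * y + m * x)^2 + (p * r - m^2) * x^2"
    by (simp add: power2_eq_square algebra_simps)
  also have "\<dots> \<ge> 0"
    using assms by simp
  finally show ?thesis
    using \<open>r < 0\<close> by (simp add: zero_le_mult_iff)
qed

lemma binary_form_neg:
  fixes p m r x y :: real
  assumes "r < 0" and "m^2 < p * r" and "x \<noteq> 0 \<or> y \<noteq> 0"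
  shows "p * x^2 + 2 * m * x * y + r * y^2 < 0"
proof -
  have "r * (p * x^2 + 2 * m * x * y + r * y^2) = (r * y + m * x)^2 + (p * r - m^2) * x^2"
    by (simp add: power2_eq_square algebra_simps)
  also have "\<dots> > 0"
    using assms by (cases "x = 0") (auto simp: add_nonneg_pos)
  finally show ?thesis
    using \<open>r < 0\<close> by (simp add: zero_less_mult_iff)
qed

lemma quadratic_nonneg_of_large:
  fixes D B K L :: real
  assumes "1 \<le> L" and "\<bar>B\<bar> + \<bar>K\<bar> \<le> D * L"
  shows "0 \<le> D * L^2 + B * L + K"
proof -
  have "(\<bar>B\<bar> + \<bar>K\<bar>) * L \<le> D * L * L"
    using assms by (simp add: mult_right_mono)
  moreover have "\<bar>K\<bar> * 1 \<le> \<bar>K\<bar> * L"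
    using assms(1) by (intro mult_left_mono) auto
  moreover have "- \<bar>B\<bar> * L \<le> B * L"
    using assms(1) by (intro mult_right_mono) auto
  moreover have "- \<bar>K\<bar> \<le> K"
    by simp
  ultimately show ?thesis
    by (simp add: power2_eq_square algebra_simps)
qed

lemma binary_form_absorb:
  fixes p m r \<alpha> \<beta> \<delta> :: real
  assumes "r < 0" and "m^2 < p * r"
  obtains L where "0 \<le> L"
    "\<And>x y. (\<alpha> * x^2 + 2 * \<beta> * x * y + \<delta> * y^2) + L * (p * x^2 + 2 * m * x * y + r * y^2) \<le> 0"
proof -
  define D where "D = p * r - m^2"
  define B where "B = \<alpha> * r + p * \<delta> - 2 * \<beta> * m"
  define K where "K = \<alpha> * \<delta> - \<beta>^2"
  define L where "L = 1 + (\<bar>B\<bar> + \<bar>K\<bar>) / D + \<bar>\<delta>\<bar> / \<bar>r\<bar>"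
  have "D > 0" "\<bar>r\<bar> > 0"
    using assms by (simp_all add: D_def)
  then have "0 \<le> (\<bar>B\<bar> + \<bar>K\<bar>) / D" "0 \<le> \<bar>\<delta>\<bar> / \<bar>r\<bar>"
    by simp_all
  then have "L \<ge> 1" "(\<bar>B\<bar> + \<bar>K\<bar>) / D \<le> L" "\<bar>\<delta>\<bar> / \<bar>r\<bar> < L"
    by (simp_all add: L_def)
  then have "\<bar>B\<bar> + \<bar>K\<bar> \<le> D * L" "\<bar>\<delta>\<bar> < L * \<bar>r\<bar>"
    using \<open>D > 0\<close> \<open>\<bar>r\<bar> > 0\<close> by (simp_all add: pos_divide_le_eq pos_divide_less_eq mult.commute)
  then have "\<delta> + L * r < 0"
    using \<open>r < 0\<close> by (simp add: abs_if split: if_splits)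
  have "0 \<le> D * L^2 + B * L + K"
    using \<open>L \<ge> 1\<close> \<open>\<bar>B\<bar> + \<bar>K\<bar> \<le> D * L\<close> by (rule quadratic_nonneg_of_large)
  also have "D * L^2 + B * L + K = (\<alpha> + L * p) * (\<delta> + L * r) - (\<beta> + L * m)^2"
    unfolding D_def B_def K_def by (simp add: power2_eq_square algebra_simps)
  finally have disc: "(\<beta> + L * m)^2 \<le> (\<alpha> + L * p) * (\<delta> + L * r)"
    by simp
  show ?thesis
  proof (rule that)
    show "0 \<le> L"
      using \<open>L \<ge> 1\<close> by simp
  next
    fix x y :: real
    have "(\<alpha> * x^2 + 2 * \<beta> * x * y + \<delta> * y^2) + L * (p * x^2 + 2 * m * x * y + r * y^2)
        = (\<alpha> + L * p) * x^2 + 2 * (\<beta> + L * m) * x * y + (\<delta> + L * r) * y^2"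
      by (simp add: algebra_simps)
    also have "\<dots> \<le> 0"
      using \<open>\<delta> + L * r < 0\<close> disc by (rule binary_form_nonpos)
    finally show "(\<alpha> * x^2 + 2 * \<beta> * x * y + \<delta> * y^2) + L * (p * x^2 + 2 * m * x * y + r * y^2) \<le> 0" .
  qed
qed

definition real_block_matrix :: "real \<Rightarrow> real \<Rightarrow> real \<Rightarrow> real \<Rightarrow> real \<Rightarrow> complex^3^3" where
  "real_block_matrix p m m' r t =
     vector [vector [complex_of_real p, complex_of_real m, 0],
             vector [complex_of_real m', complex_of_real r, 0],
             vector [0, 0, complex_of_real t]]"

lemma Im_real_block_matrix: "Im (real_block_matrix p m m' r t $ i $ j) = 0"
  using exhaust_3[of i] exhaust_3[of j] by (auto simp: real_block_matrix_def)

lemma hermitian_real_block_matrix: "hermitian (real_block_matrix p m m r t)"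
  by (simp add: hermitian_def forall_3 real_block_matrix_def)

lemma real_quad_form_real_block_matrix:
  "real_quad_form (real_block_matrix p m m' r t) x
     = p * (x$1)^2 + (m + m') * x$1 * x$2 + r * (x$2)^2 + t * (x$3)^2"
  by (simp add: real_quad_form_def real_block_matrix_def sum_3 power2_eq_square algebra_simps)

lemma real_block_matrix_neg_definite:
  assumes "r < 0" "t < 0" "m^2 < p * r" and "x \<noteq> 0"
  shows "real_quad_form (real_block_matrix p m m r t) x < 0"
proof -
  have "t * (x$3)^2 \<le> 0"
    using \<open>t < 0\<close> by (simp add: mult_nonpos_nonneg)
  show ?thesis
  proof (cases "x$1 = 0 \<and> x$2 = 0")
    case True
    then have "x$3 \<noteq> 0"
      using \<open>x \<noteq> 0\<close> by (auto simp: vec_eq_iff forall_3)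
    then show ?thesis
      using True \<open>t < 0\<close> by (simp add: real_quad_form_real_block_matrix mult_neg_pos)
  next
    case False
    then have "p * (x$1)^2 + 2 * m * x$1 * x$2 + r * (x$2)^2 < 0"
      using assms by (intro binary_form_neg) auto
    then show ?thesis
      using \<open>t * (x$3)^2 \<le> 0\<close> by (simp add: real_quad_form_real_block_matrix)
  qed
qed

lemma real_block_matrix_absorb:
  assumes "r < 0" "t < 0" "m^2 < p * r" and "t' \<le> 0"
  obtains L where "0 \<le> L" and
    "\<And>x. real_quad_form (real_block_matrix \<alpha> \<beta> \<beta>' \<delta> t') x
          + L * real_quad_form (real_block_matrix p m m r t) x \<le> 0"
proof -
  obtain L where "0 \<le> L" and L: "\<And>x y. (\<alpha> * x^2 + 2 * ((\<beta> + \<beta>') / 2) * x * y + \<delta> * y^2)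
      + L * (p * x^2 + 2 * m * x * y + r * y^2) \<le> 0"
    using binary_form_absorb[OF \<open>r < 0\<close> \<open>m^2 < p * r\<close>] by blast
  show ?thesis
  proof (rule that[OF \<open>0 \<le> L\<close>])
    fix x :: "real^3"
    have "(t' + L * t) * (x$3)^2 \<le> 0"
      using \<open>0 \<le> L\<close> \<open>t < 0\<close> \<open>t' \<le> 0\<close>
      by (intro mult_nonpos_nonneg) (simp_all add: mult_nonneg_nonpos add_nonpos_nonpos)
    moreover have "real_quad_form (real_block_matrix \<alpha> \<beta> \<beta>' \<delta> t') x
          + L * real_quad_form (real_block_matrix p m m r t) x
        = (\<alpha> * (x$1)^2 + 2 * ((\<beta> + \<beta>') / 2) * x$1 * x$2 + \<delta> * (x$2)^2)
          + L * (p * (x$1)^2 + 2 * m * x$1 * x$2 + r * (x$2)^2) + (t' + L * t) * (x$3)^2"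
      by (simp add: real_quad_form_real_block_matrix algebra_simps)
    ultimately show "real_quad_form (real_block_matrix \<alpha> \<beta> \<beta>' \<delta> t') x
          + L * real_quad_form (real_block_matrix p m m r t) x \<le> 0"
      using L[of "x$1" "x$2"] by linarith
  qed
qed

section \<open>The Saint-Venant matrices at the downstream endstate\<close>

text \<open>With \<open>u = Q/H\<close> the velocity and \<open>c2 = H/F\<^sup>2\<close> the squared wave speed of an
  endstate, this matrix makes both \<open>S A1\<close> and \<open>S A2\<close> symmetric.\<close>

definition symmetrizer :: "real \<Rightarrow> real \<Rightarrow> complex^3^3" where
  "symmetrizer u c2 = real_block_matrix (u^2 + c2) (-u) (-u) 1 1"

lemma Re_quad_form_symmetrizer_nonneg:
  assumes "0 \<le> c2"
  shows "0 \<le> Re (quad_form (symmetrizer u c2) w)"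
proof (rule Re_quad_form_nonneg)
  show "Im (symmetrizer u c2 $ i $ j) = 0" for i j
    by (simp add: symmetrizer_def Im_real_block_matrix)
  show "0 \<le> real_quad_form (symmetrizer u c2) x" for x
  proof -
    have "real_quad_form (symmetrizer u c2) x = (u * x$1 - x$2)^2 + c2 * (x$1)^2 + (x$3)^2"
      by (simp add: symmetrizer_def real_quad_form_real_block_matrix power2_eq_square algebra_simps)
    then show ?thesis
      using assms by simp
  qed
qed

lemma HH_eq: "HH \<nu> = 1 / \<nu>^2" and QQ_eq: "QQ \<nu> = 1 / \<nu>^3"
  by (simp_all add: HH_def QQ_def power_int_def divide_inverse power_inverse)

lemma A1_downstream:
  fixes \<nu> F :: real
  assumes "\<nu> > 0"
  defines "a \<equiv> 1 / \<nu>" and "b \<equiv> 1 / (\<nu>^2 * F^2)" and "s \<equiv> ss \<nu>"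
  shows "A1 \<nu> F = vector [vector [complex_of_real (-s), 1, 0],
                           vector [complex_of_real (b - a^2), complex_of_real (2*a - s), 0],
                           vector [0, 0, complex_of_real (a - s)]]"
  using assms by (simp add: A1_def Let_def HH_eq QQ_eq field_simps power2_eq_square power3_eq_cube)

lemma A2_downstream:
  fixes \<nu> F :: real
  assumes "\<nu> > 0"
  defines "a \<equiv> 1 / \<nu>" and "b \<equiv> 1 / (\<nu>^2 * F^2)"
  shows "A2 \<nu> F = vector [vector [0, 0, 1],
                           vector [0, 0, complex_of_real a],
                           vector [complex_of_real b, 0, 0]]"
  using assms by (simp add: A2_def Let_def HH_eq QQ_eq field_simps power2_eq_square power3_eq_cube)

lemma EE_downstream:
  assumes "\<nu> > 0"
  shows "EE \<nu> = vector [vector [0, 0, 0],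
                          vector [3, complex_of_real (-2*\<nu>), 0],
                          vector [0, 0, complex_of_real (-\<nu>)]]"
  using assms by (simp add: EE_def Let_def HH_eq QQ_eq field_simps power2_eq_square power3_eq_cube)

lemma symmetrizer_mult_A1:
  "symmetrizer a b ** vector [vector [complex_of_real (-s), 1, 0],
                              vector [complex_of_real (b - a^2), complex_of_real (2*a - s), 0],
                              vector [0, 0, complex_of_real (a - s)]]
     = real_block_matrix (-(a^2 * (s - a)) - b * (s + a)) (b + a * (s - a)) (b + a * (s - a))
         (a - s) (a - s)"
  by (simp add: symmetrizer_def real_block_matrix_def vec_eq_iff forall_3 matrix_matrix_mult_def
      sum_3 power2_eq_square algebra_simps)

lemma hermitian_symmetrizer_mult_A2:
  "hermitian (symmetrizer a b ** vector [vector [0, 0, 1],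
                                         vector [0, 0, complex_of_real a],
                                         vector [complex_of_real b, 0, 0]])"
  by (simp add: symmetrizer_def real_block_matrix_def hermitian_def forall_3 matrix_matrix_mult_def
      sum_3 power2_eq_square)

lemma symmetrizer_mult_EE:
  assumes "\<nu> \<noteq> 0"
  shows "symmetrizer (1 / \<nu>) b ** vector [vector [0, 0, 0],
                                           vector [3, complex_of_real (-2*\<nu>), 0],
                                           vector [0, 0, complex_of_real (-\<nu>)]]
     = real_block_matrix (-3 / \<nu>) 2 3 (-2 * \<nu>) (-\<nu>)"
  using assms by (simp add: symmetrizer_def real_block_matrix_def vec_eq_iff forall_3
      matrix_matrix_mult_def sum_3)

lemma downstream_parameters:
  fixes \<nu> F :: real
  assumes "\<nu> > 1" and "F > 2"
  defines "a \<equiv> 1 / \<nu>" and "b \<equiv> 1 / (\<nu>^2 * F^2)" and "s \<equiv> ss \<nu>"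
  shows "0 < b" and "a < s" and "b < (s - a)^2"
proof -
  have "\<nu> \<noteq> 0" "\<nu> + 1 \<noteq> 0"
    using assms(1) by simp_all
  then have "s - a = \<nu> / (\<nu> + 1)"
    unfolding a_def s_def ss_def by (simp add: divide_simps) (simp add: algebra_simps power2_eq_square)
  moreover have "1 / 2 < \<nu> / (\<nu> + 1)"
    using assms(1) by (simp add: field_simps)
  ultimately have half: "1 / 2 < s - a"
    by simp
  then show "a < s"
    by simp
  have "4 < \<nu>^2 * F^2"
  proof -
    have "1 < \<nu>^2"
      using assms(1) by (simp add: one_less_power)
    moreover have "2^2 < F^2"
      using assms(2) by (intro power_strict_mono) auto
    ultimately show ?thesis
      using mult_strict_mono[of 1 "\<nu>^2" 4 "F^2"] assms(1) by simp
  qed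
  then have "b < (1 / 2)^2"
    by (simp add: b_def field_simps)
  also have "\<dots> < (s - a)^2"
    using half by (intro power_strict_mono) auto
  finally show "b < (s - a)^2" .
  show "0 < b"
    using assms(1,2) by (simp add: b_def)
qed

lemma symmetrized_A1_discriminant:
  fixes a b s :: real
  assumes "0 < b" and "b < (s - a)^2"
  shows "(b + a * (s - a))^2 < (-(a^2 * (s - a)) - b * (s + a)) * (a - s)"
proof -
  have "(-(a^2 * (s - a)) - b * (s + a)) * (a - s) - (b + a * (s - a))^2 = b * ((s - a)^2 - b)"
    by (simp add: power2_eq_square algebra_simps)
  moreover have "0 < b * ((s - a)^2 - b)"
    using assms by simp
  ultimately show ?thesis
    by linarith
qed

lemma det_A1_form:
  "det (vector [vector [complex_of_real (-s), 1, 0],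
                vector [complex_of_real (b - a^2), complex_of_real (2*a - s), 0],
                vector [0, 0, complex_of_real (a - s)]] :: complex^3^3)
     = complex_of_real ((a - s) * ((s - a)^2 - b))"
  by (simp add: det_3 power2_eq_square algebra_simps)

lemma invertible_A1:
  assumes "\<nu> > 1" and "F > 2"
  shows "invertible (A1 \<nu> F)"
proof -
  have "(1 / \<nu> - ss \<nu>) * ((ss \<nu> - 1 / \<nu>)^2 - 1 / (\<nu>^2 * F^2)) \<noteq> 0"
    using downstream_parameters[OF assms] by simp
  moreover have "\<nu> > 0"
    using assms(1) by simp
  ultimately show ?thesis
    unfolding invertible_det_nz A1_downstream[OF \<open>\<nu> > 0\<close>] det_A1_form of_real_eq_0_iff
    by blast
qed

lemma symmetrizer_mult_downstream:
  fixes \<nu> F :: real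
  assumes "\<nu> > 0"
  defines "a \<equiv> 1 / \<nu>" and "b \<equiv> 1 / (\<nu>^2 * F^2)" and "s \<equiv> ss \<nu>"
  shows "symmetrizer a b ** A1 \<nu> F = real_block_matrix (-(a^2 * (s - a)) - b * (s + a))
           (b + a * (s - a)) (b + a * (s - a)) (a - s) (a - s)"
    and "hermitian (symmetrizer a b ** A2 \<nu> F)"
    and "symmetrizer a b ** EE \<nu> = real_block_matrix (-3 / \<nu>) 2 3 (-2 * \<nu>) (-\<nu>)"
proof -
  show "symmetrizer a b ** A1 \<nu> F = real_block_matrix (-(a^2 * (s - a)) - b * (s + a))
           (b + a * (s - a)) (b + a * (s - a)) (a - s) (a - s)"
    unfolding A1_downstream[OF assms(1)] a_def b_def s_def by (rule symmetrizer_mult_A1)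
  show "hermitian (symmetrizer a b ** A2 \<nu> F)"
    unfolding A2_downstream[OF assms(1)] a_def b_def by (rule hermitian_symmetrizer_mult_A2)
  show "symmetrizer a b ** EE \<nu> = real_block_matrix (-3 / \<nu>) 2 3 (-2 * \<nu>) (-\<nu>)"
    unfolding EE_downstream[OF assms(1)] a_def using assms(1) by (intro symmetrizer_mult_EE) simp
qed

lemma downstream_symmetrizer:
  fixes \<nu> F :: real
  assumes "\<nu> > 1" and "F > 2"
  defines "S \<equiv> symmetrizer (1 / \<nu>) (1 / (\<nu>^2 * F^2))"
  shows "hermitian S" and "hermitian (S ** A2 \<nu> F)" and "hermitian (S ** A1 \<nu> F)"
    and "\<And>w. 0 \<le> Re (quad_form S w)"
    and "\<And>w. w \<noteq> 0 \<Longrightarrow> Re (quad_form (S ** A1 \<nu> F) w) < 0"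
    and "\<exists>L. \<forall>w. Re (quad_form (S ** EE \<nu>) w) + L * Re (quad_form (S ** A1 \<nu> F) w) \<le> 0"
proof -
  define a where "a = 1 / \<nu>"
  define b where "b = 1 / (\<nu>^2 * F^2)"
  define s where "s = ss \<nu>"
  have "\<nu> > 0"
    using assms(1) by simp
  have "0 < b" "a < s" "b < (s - a)^2"
    using downstream_parameters[OF assms(1,2)] by (simp_all add: a_def b_def s_def)
  define p where "p = -(a^2 * (s - a)) - b * (s + a)"
  define m where "m = b + a * (s - a)"
  have SA1: "S ** A1 \<nu> F = real_block_matrix p m m (a - s) (a - s)"
    unfolding S_def p_def m_def a_def b_def s_def by (rule symmetrizer_mult_downstream(1)[OF \<open>\<nu> > 0\<close>])
  have SE: "S ** EE \<nu> = real_block_matrix (-3 / \<nu>) 2 3 (-2 * \<nu>) (-\<nu>)"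
    unfolding S_def by (rule symmetrizer_mult_downstream(3)[OF \<open>\<nu> > 0\<close>])
  have disc: "m^2 < p * (a - s)"
    unfolding p_def m_def using \<open>0 < b\<close> \<open>b < (s - a)^2\<close> by (rule symmetrized_A1_discriminant)
  have "a - s < 0"
    using \<open>a < s\<close> by simp
  show "hermitian S"
    by (simp add: S_def symmetrizer_def hermitian_real_block_matrix)
  show "hermitian (S ** A2 \<nu> F)"
    unfolding S_def by (rule symmetrizer_mult_downstream(2)[OF \<open>\<nu> > 0\<close>])
  show "hermitian (S ** A1 \<nu> F)"
    by (simp add: SA1 hermitian_real_block_matrix)
  show "0 \<le> Re (quad_form S w)" for w
    unfolding S_def by (rule Re_quad_form_symmetrizer_nonneg) simp
  show "Re (quad_form (S ** A1 \<nu> F) w) < 0" if "w \<noteq> 0" for w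
    unfolding SA1 using \<open>a - s < 0\<close> disc that
    by (intro Re_quad_form_neg Im_real_block_matrix real_block_matrix_neg_definite)
  have "-\<nu> \<le> 0"
    using \<open>\<nu> > 0\<close> by simp
  obtain L where "\<And>x. real_quad_form (S ** EE \<nu>) x + L * real_quad_form (S ** A1 \<nu> F) x \<le> 0"
    unfolding SE SA1 using real_block_matrix_absorb[OF \<open>a - s < 0\<close> \<open>a - s < 0\<close> disc \<open>-\<nu> \<le> 0\<close>]
    by blast
  then show "\<exists>L. \<forall>w. Re (quad_form (S ** EE \<nu>) w) + L * Re (quad_form (S ** A1 \<nu> F) w) \<le> 0"
    unfolding SE SA1 by (blast intro: Re_quad_form_absorb Im_real_block_matrix)
qed

theorem mainTheorem4:
  fixes \<nu> F :: real
  assumes "\<nu> > 1" and "F > 2"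
  shows "\<exists>C::real. \<forall>(lam::complex) (\<eta>::real) (\<gamma>::complex).
           Re lam \<ge> 0 \<longrightarrow> is_eigenvalue (Gplus \<nu> F lam \<eta>) \<gamma> \<longrightarrow> C \<le> Re \<gamma>"
proof -
  define S where "S = symmetrizer (1 / \<nu>) (1 / (\<nu>^2 * F^2))"
  note S = downstream_symmetrizer[OF assms, folded S_def]
  obtain L where absorb:
    "\<And>w. Re (quad_form (S ** EE \<nu>) w) + L * Re (quad_form (S ** A1 \<nu> F) w) \<le> 0"
    using S(6) by blast
  show ?thesis
  proof (intro exI[of _ "-L"] allI impI)
    fix lam \<gamma> :: complex and \<eta> :: real
    assume "0 \<le> Re lam" and "is_eigenvalue (Gplus \<nu> F lam \<eta>) \<gamma>"
    then obtain w where "w \<noteq> 0"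
      and "(EE \<nu> - mat lam - mat (\<i> * complex_of_real \<eta>) ** A2 \<nu> F) *v w = \<gamma> *s (A1 \<nu> F *v w)"
      using eigenvalue_mult_matrix_inv[OF invertible_A1[OF assms]] unfolding Gplus_def by blast
    then show "-L \<le> Re \<gamma>"
      using Re_generalized_eigenvalue_lower_bound[OF S(1-5) absorb \<open>0 \<le> Re lam\<close>] by blast
  qed
qed

end
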